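(* Let $(\mathcal{S},\mathcal{A},P,r,\gamma)$ be a finite discounted MDP, let $\pi$ be a policy with advantage function $A^\pi$, fix a state $s\in\mathcal{S}$ and a scalar $\eta_s>0$. Define $\pi^+_s(\eta_s) := \operatorname{Proj}_{\Delta(\mathcal{A})}\big(\pi_s + \eta_s A^\pi_{s,\cdot}\big)$ and $f_s(\eta_s) := \sum_{a\in\mathcal{A}} \pi^+_{s,a}(\eta_s)\, A^\pi_{s,a}$. Then $$f_s(\eta_s) \ge \frac{\big(\max_{a\in\mathcal{A}} A^\pi_{s,a}\big)^2}{\max_{a\in\mathcal{A}} A^\pi_{s,a} + \frac{2+5|\mathcal{A}|}{\eta_s}}.$$
   Context: A finite discounted MDP has finite state space $\mathcal{S}$, finite action space $\mathcal{A}$, transition kernel $P$, reward $r:\mathcal{S}\times\mathcal{A}\to[0,1]$ and discount $\gamma\in[0,1)$. A (stationary stochastic) policy $\pi$ assigns to each state $s$ a distribution $\pi_s=(\pi_{s,a})_{a\in\mathcal{A}}\in\Delta(\mathcal{A})$ (the probability simplex). $V^\pi(s)=\mathbb{E}[\sum_{t\ge0}\gamma^t r(s_t,a_t)\mid s_0=s]$ with $a_t\sim\pi_{s_t}$, $s_{t+1}\sim P(\cdot\mid s_t,a_t)$; $Q^\pi(s,a)$ is defined analogously with $a_0=a$; the advantage is $A^\pi_{s,a}=Q^\pi(s,a)-V^\pi(s)$. $\operatorname{Proj}_{\Delta(\mathcal{A})}$ denotes Euclidean projection onto the probability simplex. *)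

theory Defs
  imports "HOL-Analysis.Analysis"
begin

text \<open>Finite discounted MDP with state type 's and action type 'a (both finite).
  Transition kernel P s a s', reward r s a, policy pi s a.\<close>

definition prob_simplex :: "('a::finite \<Rightarrow> real) set" where
  "prob_simplex = {p. (\<forall>a. 0 \<le> p a) \<and> (\<Sum>a\<in>UNIV. p a) = 1}"

definition finite_mdp :: "('s::finite \<Rightarrow> 'a::finite \<Rightarrow> 's \<Rightarrow> real) \<Rightarrow> ('s \<Rightarrow> 'a \<Rightarrow> real) \<Rightarrow> real \<Rightarrow> bool" where
  "finite_mdp P r \<gamma> \<longleftrightarrow> (\<forall>s a. P s a \<in> prob_simplex) \<and> (\<forall>s a. 0 \<le> r s a \<and> r s a \<le> 1)
     \<and> 0 \<le> \<gamma> \<and> \<gamma> < 1"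

definition is_policy :: "('s::finite \<Rightarrow> 'a::finite \<Rightarrow> real) \<Rightarrow> bool" where
  "is_policy \<pi> \<longleftrightarrow> (\<forall>s. \<pi> s \<in> prob_simplex)"

definition P_pol :: "('s::finite \<Rightarrow> 'a::finite \<Rightarrow> 's \<Rightarrow> real) \<Rightarrow> ('s \<Rightarrow> 'a \<Rightarrow> real) \<Rightarrow> 's \<Rightarrow> 's \<Rightarrow> real" where
  "P_pol P \<pi> s s' = (\<Sum>a\<in>UNIV. \<pi> s a * P s a s')"

definition r_pol :: "('s::finite \<Rightarrow> 'a::finite \<Rightarrow> real) \<Rightarrow> ('s \<Rightarrow> 'a \<Rightarrow> real) \<Rightarrow> 's \<Rightarrow> real" where
  "r_pol r \<pi> s = (\<Sum>a\<in>UNIV. \<pi> s a * r s a)"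

fun P_steps :: "('s::finite \<Rightarrow> 'a::finite \<Rightarrow> 's \<Rightarrow> real) \<Rightarrow> ('s \<Rightarrow> 'a \<Rightarrow> real) \<Rightarrow> nat \<Rightarrow> 's \<Rightarrow> 's \<Rightarrow> real" where
  "P_steps P \<pi> 0 s s' = (if s = s' then 1 else 0)"
| "P_steps P \<pi> (Suc n) s s' = (\<Sum>s''\<in>UNIV. P_steps P \<pi> n s s'' * P_pol P \<pi> s'' s')"

definition V_fun :: "('s::finite \<Rightarrow> 'a::finite \<Rightarrow> 's \<Rightarrow> real) \<Rightarrow> ('s \<Rightarrow> 'a \<Rightarrow> real) \<Rightarrow> real \<Rightarrow> ('s \<Rightarrow> 'a \<Rightarrow> real) \<Rightarrow> 's \<Rightarrow> real" where
  "V_fun P r \<gamma> \<pi> s = (\<Sum>t. \<gamma> ^ t * (\<Sum>s'\<in>UNIV. P_steps P \<pi> t s s' * r_pol r \<pi> s'))"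

definition Q_fun :: "('s::finite \<Rightarrow> 'a::finite \<Rightarrow> 's \<Rightarrow> real) \<Rightarrow> ('s \<Rightarrow> 'a \<Rightarrow> real) \<Rightarrow> real \<Rightarrow> ('s \<Rightarrow> 'a \<Rightarrow> real) \<Rightarrow> 's \<Rightarrow> 'a \<Rightarrow> real" where
  "Q_fun P r \<gamma> \<pi> s a = r s a + \<gamma> * (\<Sum>s'\<in>UNIV. P s a s' * V_fun P r \<gamma> \<pi> s')"

definition adv :: "('s::finite \<Rightarrow> 'a::finite \<Rightarrow> 's \<Rightarrow> real) \<Rightarrow> ('s \<Rightarrow> 'a \<Rightarrow> real) \<Rightarrow> real \<Rightarrow> ('s \<Rightarrow> 'a \<Rightarrow> real) \<Rightarrow> 's \<Rightarrow> 'a \<Rightarrow> real" where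
  "adv P r \<gamma> \<pi> s a = Q_fun P r \<gamma> \<pi> s a - V_fun P r \<gamma> \<pi> s"

definition proj_simplex :: "('a::finite \<Rightarrow> real) \<Rightarrow> ('a \<Rightarrow> real)" where
  "proj_simplex x = (THE y. y \<in> prob_simplex \<and>
      (\<forall>z\<in>prob_simplex. (\<Sum>a\<in>UNIV. (y a - x a)^2) \<le> (\<Sum>a\<in>UNIV. (z a - x a)^2)))"

end

theory Submission
  imports Defs
begin

text \<open>Write \<open>p = \<pi> s\<close>, \<open>B = A s\<close>, \<open>y\<close> for the projection of \<open>p + \<eta> B\<close>,
  \<open>f = \<langle>y, B\<rangle>\<close> and \<open>M = B b = max B\<close>. By the Bellman equation \<open>\<langle>p, B\<rangle> = 0\<close>, so \<open>M \<ge> 0\<close>.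
  The obtuse-angle criterion for the projection, tested against \<open>z = p\<close> and against the vertex
  \<open>z = e\<^sub>b\<close>, gives \<open>|y - p|\<^sup>2 \<le> \<eta> f\<close> and \<open>\<eta> (M - f) \<le> \<langle>e\<^sub>b - y, y - p\<rangle>\<close>.
  By Cauchy-Schwarz and since the simplex has squared diameter 2, the right-hand side \<open>t\<close>
  satisfies \<open>t\<^sup>2 \<le> 2 \<eta> f\<close> and \<open>t \<le> 2\<close>; elementary algebra then gives
  \<open>M\<^sup>2 \<le> f (M + 4 / \<eta>)\<close>. So the bound even holds with 4 in place of \<open>2 + 5 |\<A>|\<close>.\<close>

lemma prob_simplex_nonneg: "p \<in> prob_simplex \<Longrightarrow> 0 \<le> p a"
  by (simp add: prob_simplex_def)

lemma prob_simplex_sum: "p \<in> prob_simplex \<Longrightarrow> (\<Sum>a\<in>UNIV. p a) = 1"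
  by (simp add: prob_simplex_def)

lemma prob_simplex_le_1:
  assumes "p \<in> prob_simplex" shows "p a \<le> 1"
proof -
  have "p a \<le> (\<Sum>b\<in>UNIV. p b)"
    by (rule member_le_sum) (simp_all add: prob_simplex_nonneg[OF assms])
  then show ?thesis by (simp add: prob_simplex_sum[OF assms])
qed

lemma prob_simplex_mixture:
  fixes w :: "'i::finite \<Rightarrow> real" and q :: "'i \<Rightarrow> 'a::finite \<Rightarrow> real"
  assumes "w \<in> prob_simplex" and "\<And>i. q i \<in> prob_simplex"
  shows "(\<lambda>a. \<Sum>i\<in>UNIV. w i * q i a) \<in> prob_simplex"
proof -
  have "(\<Sum>a\<in>UNIV. \<Sum>i\<in>UNIV. w i * q i a) = (\<Sum>i\<in>UNIV. w i * (\<Sum>a\<in>UNIV. q i a))"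
    unfolding sum_distrib_left by (rule sum.swap)
  with assms show ?thesis
    by (auto simp: prob_simplex_def intro!: sum_nonneg)
qed

lemma prob_simplex_expectation_bounds:
  fixes p f :: "'a::finite \<Rightarrow> real"
  assumes "p \<in> prob_simplex" and "\<And>a. 0 \<le> f a" and "\<And>a. f a \<le> 1"
  shows "0 \<le> (\<Sum>a\<in>UNIV. p a * f a)" and "(\<Sum>a\<in>UNIV. p a * f a) \<le> 1"
proof -
  show "0 \<le> (\<Sum>a\<in>UNIV. p a * f a)"
    using assms by (intro sum_nonneg) (simp add: prob_simplex_nonneg)
  have "(\<Sum>a\<in>UNIV. p a * f a) \<le> (\<Sum>a\<in>UNIV. p a)"
    using assms by (intro sum_mono mult_left_le) (simp_all add: prob_simplex_nonneg)
  then show "(\<Sum>a\<in>UNIV. p a * f a) \<le> 1"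
    by (simp add: prob_simplex_sum[OF assms(1)])
qed

lemma sum_sq_diff_prob_simplex_le_2:
  assumes "p \<in> prob_simplex" and "q \<in> prob_simplex"
  shows "(\<Sum>a\<in>UNIV. (p a - q a)\<^sup>2) \<le> 2"
proof -
  have "(p a - q a)\<^sup>2 \<le> p a + q a" for a
  proof -
    have "p a * p a \<le> p a" "q a * q a \<le> q a" "0 \<le> p a * q a"
      using assms by (simp_all add: mult_left_le prob_simplex_nonneg prob_simplex_le_1)
    then show ?thesis by (simp add: power2_eq_square algebra_simps)
  qed
  then have "(\<Sum>a\<in>UNIV. (p a - q a)\<^sup>2) \<le> (\<Sum>a\<in>UNIV. p a + q a)"
    by (rule sum_mono)
  also have "\<dots> = 2"
    using assms by (simp add: sum.distrib prob_simplex_sum)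
  finally show ?thesis .
qed

text \<open>The simplex as a subset of the Euclidean space \<open>real^'a\<close>, where the projection is the
  library's \<open>closest_point\<close> of a closed convex set.\<close>

definition prob_simplex_vec :: "(real^'a::finite) set" where
  "prob_simplex_vec = {v. vec_nth v \<in> prob_simplex}"

lemma prob_simplex_vec_eq: "prob_simplex_vec = {v. (\<forall>a. 0 \<le> v$a) \<and> (\<Sum>a\<in>UNIV. v$a) = 1}"
  by (simp add: prob_simplex_vec_def prob_simplex_def)

lemma closed_prob_simplex_vec: "closed prob_simplex_vec"
  unfolding prob_simplex_vec_eq
  by (intro closed_Collect_conj closed_Collect_all closed_Collect_le closed_Collect_eq
      continuous_intros)

lemma convex_prob_simplex_vec: "convex prob_simplex_vec"
  unfolding prob_simplex_vec_eq convex_def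
  by (auto simp: sum.distrib simp flip: sum_distrib_left)

lemma prob_simplex_vec_nonempty: "prob_simplex_vec \<noteq> {}"
proof -
  have "(\<chi> a. 1 / real CARD('a)) \<in> (prob_simplex_vec :: (real^'a::finite) set)"
    by (simp add: prob_simplex_vec_eq)
  then show ?thesis by blast
qed

lemma dist_vec_le_iff_sum_sq:
  fixes u v w :: "real^'a::finite"
  shows "dist u v \<le> dist u w \<longleftrightarrow> (\<Sum>a\<in>UNIV. (v$a - u$a)\<^sup>2) \<le> (\<Sum>a\<in>UNIV. (w$a - u$a)\<^sup>2)"
  by (simp add: dist_vec_def L2_set_def dist_real_def power2_commute)

lemma proj_simplex_eq_closest_point:
  "proj_simplex x = vec_nth (closest_point prob_simplex_vec (vec_lambda x))"
proof -
  let ?c = "closest_point prob_simplex_vec (vec_lambda x)"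
  have c_in: "?c \<in> prob_simplex_vec"
    and c_min: "\<forall>w\<in>prob_simplex_vec. dist (vec_lambda x) ?c \<le> dist (vec_lambda x) w"
    using closest_point_exists[OF closed_prob_simplex_vec prob_simplex_vec_nonempty] by auto
  show ?thesis
    unfolding proj_simplex_def
  proof (rule the_equality)
    show "vec_nth ?c \<in> prob_simplex \<and> (\<forall>z\<in>prob_simplex.
        (\<Sum>a\<in>UNIV. (?c$a - x a)\<^sup>2) \<le> (\<Sum>a\<in>UNIV. (z a - x a)\<^sup>2))"
    proof (intro conjI ballI)
      show "vec_nth ?c \<in> prob_simplex" using c_in by (simp add: prob_simplex_vec_def)
      fix z :: "'a \<Rightarrow> real"
      assume "z \<in> prob_simplex"
      with c_min have "dist (vec_lambda x) ?c \<le> dist (vec_lambda x) (vec_lambda z)"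
        by (simp add: prob_simplex_vec_def vec_lambda_inverse)
      then show "(\<Sum>a\<in>UNIV. (?c$a - x a)\<^sup>2) \<le> (\<Sum>a\<in>UNIV. (z a - x a)\<^sup>2)"
        by (simp add: dist_vec_le_iff_sum_sq)
    qed
  next
    fix y
    assume "y \<in> prob_simplex \<and> (\<forall>z\<in>prob_simplex.
        (\<Sum>a\<in>UNIV. (y a - x a)\<^sup>2) \<le> (\<Sum>a\<in>UNIV. (z a - x a)\<^sup>2))"
    then have "vec_lambda y = ?c"
      by (intro closest_point_unique convex_prob_simplex_vec closed_prob_simplex_vec)
        (auto simp: prob_simplex_vec_def dist_vec_le_iff_sum_sq vec_lambda_inverse)
    then show "y = vec_nth ?c"
      by (metis vec_lambda_inverse UNIV_I)
  qed
qed

lemma proj_simplex_in_prob_simplex: "proj_simplex x \<in> prob_simplex"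
  using closest_point_in_set[OF closed_prob_simplex_vec prob_simplex_vec_nonempty]
  by (simp add: proj_simplex_eq_closest_point prob_simplex_vec_def)

lemma proj_simplex_obtuse_angle:
  assumes "z \<in> prob_simplex"
  shows "(\<Sum>a\<in>UNIV. (x a - proj_simplex x a) * (z a - proj_simplex x a)) \<le> 0"
  using closest_point_dot[OF convex_prob_simplex_vec closed_prob_simplex_vec,
      of "vec_lambda z" "vec_lambda x"] assms
  by (simp add: proj_simplex_eq_closest_point inner_vec_def prob_simplex_vec_def vec_lambda_inverse)

lemma proj_simplex_step_variational_ineq:
  fixes p B z :: "'a::finite \<Rightarrow> real" and \<eta> :: real
  assumes "z \<in> prob_simplex"
  defines "y \<equiv> proj_simplex (\<lambda>a. p a + \<eta> * B a)"
  shows "\<eta> * ((\<Sum>a\<in>UNIV. z a * B a) - (\<Sum>a\<in>UNIV. y a * B a))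
    \<le> (\<Sum>a\<in>UNIV. (z a - y a) * (y a - p a))"
proof -
  have "(\<Sum>a\<in>UNIV. (p a + \<eta> * B a - y a) * (z a - y a))
      = (\<Sum>a\<in>UNIV. \<eta> * (z a * B a) - \<eta> * (y a * B a) - (z a - y a) * (y a - p a))"
    by (rule sum.cong) (simp_all add: algebra_simps)
  also have "\<dots> = \<eta> * ((\<Sum>a\<in>UNIV. z a * B a) - (\<Sum>a\<in>UNIV. y a * B a))
      - (\<Sum>a\<in>UNIV. (z a - y a) * (y a - p a))"
    by (simp add: sum_subtractf sum_distrib_left right_diff_distrib)
  finally show ?thesis
    using proj_simplex_obtuse_angle[OF assms(1), of "\<lambda>a. p a + \<eta> * B a"] by (simp add: y_def)
qed

lemma sq_le_mult_add_of_gap: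
  fixes m g t c :: real
  assumes "0 \<le> m" and "m - g \<le> t" and "t\<^sup>2 \<le> 2 * g" and "t \<le> 2" and "4 \<le> c"
  shows "m\<^sup>2 \<le> g * (m + c)"
proof -
  have "0 \<le> g" using assms(3) zero_le_power2[of t] by linarith
  show ?thesis
  proof (cases "m \<le> g")
    case True
    have "m\<^sup>2 = m * m" by (simp add: power2_eq_square)
    also have "\<dots> \<le> g * m" using True assms(1) by (rule mult_right_mono)
    also have "\<dots> \<le> g * (m + c)" using \<open>0 \<le> g\<close> assms(5) by (intro mult_left_mono) simp_all
    finally show ?thesis .
  next
    case False
    define d where "d = m - g"
    have "0 < d" "d \<le> t" using False assms(2) by (simp_all add: d_def)
    then have "d\<^sup>2 \<le> 2 * g" using assms(3) power_mono[of d t 2] by linarith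
    moreover have "g * d \<le> g * 2" using \<open>0 \<le> g\<close> \<open>d \<le> t\<close> assms(4)
      by (intro mult_left_mono) simp_all
    moreover have "4 * g \<le> c * g" using assms(5) \<open>0 \<le> g\<close> by (rule mult_right_mono)
    moreover have "m\<^sup>2 - g * (m + c) = g * d + d\<^sup>2 - c * g"
      by (simp add: d_def power2_eq_square algebra_simps)
    ultimately show ?thesis by linarith
  qed
qed

lemma proj_simplex_ascent_lower_bound:
  fixes p B :: "'a::finite \<Rightarrow> real" and \<eta> c :: real
  assumes p: "p \<in> prob_simplex" and mean_zero: "(\<Sum>a\<in>UNIV. p a * B a) = 0"
    and "0 < \<eta>" and "4 \<le> c"
  defines "y \<equiv> proj_simplex (\<lambda>a. p a + \<eta> * B a)" and "M \<equiv> Max (range B)"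
  shows "M\<^sup>2 / (M + c / \<eta>) \<le> (\<Sum>a\<in>UNIV. y a * B a)"
proof -
  define f where "f = (\<Sum>a\<in>UNIV. y a * B a)"
  have y: "y \<in> prob_simplex" by (simp add: y_def proj_simplex_in_prob_simplex)
  have "M \<in> range B" unfolding M_def by (intro Max_in) simp_all
  then obtain b where b: "B b = M" by blast
  have "0 \<le> M"
  proof -
    have "0 \<le> (\<Sum>a\<in>UNIV. p a * (M - B a))"
      using p by (intro sum_nonneg mult_nonneg_nonneg) (simp_all add: prob_simplex_nonneg M_def)
    also have "\<dots> = M"
      using mean_zero prob_simplex_sum[OF p]
      by (simp add: right_diff_distrib sum_subtractf flip: sum_distrib_right)
    finally show ?thesis .
  qed
  define e where "e = (\<lambda>a. if a = b then 1 else 0 :: real)"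
  have e: "e \<in> prob_simplex" by (simp add: e_def prob_simplex_def)
  have "(\<Sum>a\<in>UNIV. e a * B a) = (\<Sum>a\<in>UNIV. if a = b then B a else 0)"
    by (rule sum.cong) (simp_all add: e_def)
  then have "(\<Sum>a\<in>UNIV. e a * B a) = M" by (simp add: b)
  define t where "t = (\<Sum>a\<in>UNIV. (e a - y a) * (y a - p a))"
  have gap: "\<eta> * (M - f) \<le> t"
    using proj_simplex_step_variational_ineq[OF e, of \<eta> B p] \<open>(\<Sum>a\<in>UNIV. e a * B a) = M\<close>
    by (simp add: t_def f_def y_def)
  have "\<eta> * (0 - f) \<le> (\<Sum>a\<in>UNIV. (p a - y a) * (y a - p a))"
    using proj_simplex_step_variational_ineq[OF p, of \<eta> B p] mean_zero
    by (simp add: f_def y_def)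
  also have "\<dots> = - (\<Sum>a\<in>UNIV. (y a - p a)\<^sup>2)"
    unfolding sum_negf[symmetric] by (rule sum.cong) (simp_all add: power2_eq_square algebra_simps)
  finally have dist_le: "(\<Sum>a\<in>UNIV. (y a - p a)\<^sup>2) \<le> \<eta> * f" by simp
  have "t\<^sup>2 \<le> (\<Sum>a\<in>UNIV. (e a - y a)\<^sup>2) * (\<Sum>a\<in>UNIV. (y a - p a)\<^sup>2)"
    unfolding t_def by (rule Cauchy_Schwarz_ineq_sum)
  also have "\<dots> \<le> 2 * (\<Sum>a\<in>UNIV. (y a - p a)\<^sup>2)"
    using sum_sq_diff_prob_simplex_le_2[OF e y] by (intro mult_right_mono sum_nonneg) simp_all
  finally have t_sq: "t\<^sup>2 \<le> 2 * (\<Sum>a\<in>UNIV. (y a - p a)\<^sup>2)" .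
  have "t\<^sup>2 \<le> 2\<^sup>2" using t_sq sum_sq_diff_prob_simplex_le_2[OF y p] by simp
  then have "t \<le> 2" by (rule power2_le_imp_le) simp
  have "(\<eta> * M)\<^sup>2 \<le> (\<eta> * f) * (\<eta> * M + c)"
    using \<open>0 \<le> M\<close> \<open>0 < \<eta>\<close> gap t_sq dist_le \<open>t \<le> 2\<close> \<open>4 \<le> c\<close>
    by (intro sq_le_mult_add_of_gap[where t = t]) (simp_all add: right_diff_distrib)
  also have "\<dots> = \<eta>\<^sup>2 * (f * (M + c / \<eta>))"
    using \<open>0 < \<eta>\<close> by (simp add: power2_eq_square field_simps)
  finally have "M\<^sup>2 \<le> f * (M + c / \<eta>)"
    using \<open>0 < \<eta>\<close> by (simp add: power_mult_distrib)
  moreover have "0 < M + c / \<eta>"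
    using \<open>0 \<le> M\<close> \<open>0 < \<eta>\<close> \<open>4 \<le> c\<close> by (simp add: add_nonneg_pos)
  ultimately show ?thesis by (simp add: f_def pos_divide_le_eq)
qed

definition expected_reward ::
    "('s::finite \<Rightarrow> 'a::finite \<Rightarrow> 's \<Rightarrow> real) \<Rightarrow> ('s \<Rightarrow> 'a \<Rightarrow> real) \<Rightarrow> ('s \<Rightarrow> 'a \<Rightarrow> real)
      \<Rightarrow> nat \<Rightarrow> 's \<Rightarrow> real" where
  "expected_reward P r \<pi> t s = (\<Sum>s'\<in>UNIV. P_steps P \<pi> t s s' * r_pol r \<pi> s')"

lemma V_fun_eq_suminf_expected_reward:
  "V_fun P r \<gamma> \<pi> s = (\<Sum>t. \<gamma> ^ t * expected_reward P r \<pi> t s)"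
  by (simp add: V_fun_def expected_reward_def)

lemma P_steps_Suc_left:
  "P_steps P \<pi> (Suc t) s s' = (\<Sum>u\<in>UNIV. P_pol P \<pi> s u * P_steps P \<pi> t u s')"
proof (induction t arbitrary: s')
  case 0
  have "(\<Sum>u\<in>UNIV. (if s = u then 1 else 0) * P_pol P \<pi> u s') = P_pol P \<pi> s s'"
    by (simp flip: of_bool_def)
  moreover have "(\<Sum>u\<in>UNIV. P_pol P \<pi> s u * (if u = s' then 1 else 0)) = P_pol P \<pi> s s'"
    by (simp flip: of_bool_def)
  ultimately show ?case by simp
next
  case (Suc t)
  have "P_steps P \<pi> (Suc (Suc t)) s s'
      = (\<Sum>v\<in>UNIV. (\<Sum>u\<in>UNIV. P_pol P \<pi> s u * P_steps P \<pi> t u v) * P_pol P \<pi> v s')"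
    using Suc by simp
  also have "\<dots> = (\<Sum>u\<in>UNIV. P_pol P \<pi> s u * (\<Sum>v\<in>UNIV. P_steps P \<pi> t u v * P_pol P \<pi> v s'))"
    unfolding sum_distrib_left sum_distrib_right mult.assoc by (rule sum.swap)
  finally show ?case by simp
qed

lemma expected_reward_0: "expected_reward P r \<pi> 0 s = r_pol r \<pi> s"
  by (simp add: expected_reward_def flip: of_bool_def)

lemma expected_reward_Suc:
  "expected_reward P r \<pi> (Suc t) s = (\<Sum>u\<in>UNIV. P_pol P \<pi> s u * expected_reward P r \<pi> t u)"
  unfolding expected_reward_def P_steps_Suc_left sum_distrib_left sum_distrib_right mult.assoc
  by (rule sum.swap)

context
  fixes P :: "'s::finite \<Rightarrow> 'a::finite \<Rightarrow> 's \<Rightarrow> real"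
    and r :: "'s \<Rightarrow> 'a \<Rightarrow> real" and \<gamma> :: real and \<pi> :: "'s \<Rightarrow> 'a \<Rightarrow> real"
  assumes mdp: "finite_mdp P r \<gamma>" and pol: "is_policy \<pi>"
begin

lemma P_pol_in_prob_simplex: "P_pol P \<pi> s \<in> prob_simplex"
proof -
  have "P_pol P \<pi> s = (\<lambda>s'. \<Sum>a\<in>UNIV. \<pi> s a * P s a s')"
    by (simp add: P_pol_def fun_eq_iff)
  also have "\<dots> \<in> prob_simplex"
    using mdp pol by (intro prob_simplex_mixture) (simp_all add: finite_mdp_def is_policy_def)
  finally show ?thesis .
qed

lemma P_steps_in_prob_simplex: "P_steps P \<pi> t s \<in> prob_simplex"
proof (induction t)
  case 0
  show ?case by (simp add: prob_simplex_def fun_eq_iff)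
next
  case (Suc t)
  have "P_steps P \<pi> (Suc t) s = (\<lambda>s'. \<Sum>u\<in>UNIV. P_steps P \<pi> t s u * P_pol P \<pi> u s')"
    by (simp add: fun_eq_iff)
  also have "\<dots> \<in> prob_simplex"
    using Suc by (intro prob_simplex_mixture P_pol_in_prob_simplex)
  finally show ?case .
qed

lemma r_pol_bounds: "0 \<le> r_pol r \<pi> s" "r_pol r \<pi> s \<le> 1"
  using prob_simplex_expectation_bounds[of "\<pi> s" "r s"] mdp pol
  by (simp_all add: r_pol_def finite_mdp_def is_policy_def)

lemma expected_reward_bounds: "0 \<le> expected_reward P r \<pi> t s" "expected_reward P r \<pi> t s \<le> 1"
  using prob_simplex_expectation_bounds[OF P_steps_in_prob_simplex, of "r_pol r \<pi>" t s]
  by (simp_all add: r_pol_bounds expected_reward_def)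

lemma summable_discounted_reward: "summable (\<lambda>t. \<gamma> ^ t * expected_reward P r \<pi> t s)"
proof (rule summable_comparison_test[of _ "\<lambda>t. \<gamma> ^ t"])
  have "0 \<le> \<gamma>" "\<gamma> < 1" using mdp by (simp_all add: finite_mdp_def)
  then show "summable (\<lambda>t. \<gamma> ^ t)" by (simp add: summable_geometric)
  show "\<exists>N. \<forall>t\<ge>N. norm (\<gamma> ^ t * expected_reward P r \<pi> t s) \<le> \<gamma> ^ t"
    using \<open>0 \<le> \<gamma>\<close> expected_reward_bounds by (auto simp: abs_mult intro!: exI[of _ 0] mult_left_le)
qed

lemma V_fun_Bellman:
  "V_fun P r \<gamma> \<pi> s = r_pol r \<pi> s + \<gamma> * (\<Sum>u\<in>UNIV. P_pol P \<pi> s u * V_fun P r \<gamma> \<pi> u)"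
proof -
  let ?R = "expected_reward P r \<pi>"
  have "V_fun P r \<gamma> \<pi> s = ?R 0 s + (\<Sum>t. \<gamma> ^ Suc t * ?R (Suc t) s)"
    using suminf_split_head[OF summable_discounted_reward[of s]]
    by (simp add: V_fun_eq_suminf_expected_reward)
  also have "(\<Sum>t. \<gamma> ^ Suc t * ?R (Suc t) s)
      = (\<Sum>t. \<gamma> * (\<Sum>u\<in>UNIV. P_pol P \<pi> s u * (\<gamma> ^ t * ?R t u)))"
    by (simp add: expected_reward_Suc sum_distrib_left algebra_simps)
  also have "\<dots> = \<gamma> * (\<Sum>u\<in>UNIV. \<Sum>t. P_pol P \<pi> s u * (\<gamma> ^ t * ?R t u))"
    by (simp add: suminf_mult suminf_sum summable_sum summable_mult summable_discounted_reward)
  also have "\<dots> = \<gamma> * (\<Sum>u\<in>UNIV. P_pol P \<pi> s u * V_fun P r \<gamma> \<pi> u)"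
    by (simp add: V_fun_eq_suminf_expected_reward suminf_mult summable_discounted_reward)
  finally show ?thesis by (simp add: expected_reward_0)
qed

lemma sum_policy_adv_eq_0: "(\<Sum>a\<in>UNIV. \<pi> s a * adv P r \<gamma> \<pi> s a) = 0"
proof -
  have "(\<Sum>a\<in>UNIV. \<pi> s a * adv P r \<gamma> \<pi> s a)
     = r_pol r \<pi> s + \<gamma> * (\<Sum>a\<in>UNIV. \<pi> s a * (\<Sum>s'\<in>UNIV. P s a s' * V_fun P r \<gamma> \<pi> s'))
       - (\<Sum>a\<in>UNIV. \<pi> s a) * V_fun P r \<gamma> \<pi> s"
    unfolding adv_def Q_fun_def r_pol_def
    by (simp add: algebra_simps sum.distrib sum_subtractf sum_distrib_left sum_distrib_right)
  also have "(\<Sum>a\<in>UNIV. \<pi> s a * (\<Sum>s'\<in>UNIV. P s a s' * V_fun P r \<gamma> \<pi> s'))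
      = (\<Sum>u\<in>UNIV. P_pol P \<pi> s u * V_fun P r \<gamma> \<pi> u)"
    unfolding P_pol_def sum_distrib_left sum_distrib_right mult.assoc by (rule sum.swap)
  finally show ?thesis
    using V_fun_Bellman[of s] pol by (simp add: is_policy_def prob_simplex_sum)
qed

end

theorem mainTheorem2:
  fixes P :: "'s::finite \<Rightarrow> 'a::finite \<Rightarrow> 's \<Rightarrow> real"
    and r :: "'s \<Rightarrow> 'a \<Rightarrow> real" and \<gamma> :: real
    and \<pi> :: "'s \<Rightarrow> 'a \<Rightarrow> real" and s :: 's and \<eta> :: real
  assumes "finite_mdp P r \<gamma>" and "is_policy \<pi>" and "\<eta> > 0"
  defines "A \<equiv> adv P r \<gamma> \<pi>"
  defines "\<pi>plus \<equiv> proj_simplex (\<lambda>a. \<pi> s a + \<eta> * A s a)"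
  defines "M \<equiv> Max (range (\<lambda>a. A s a))"
  shows "(\<Sum>a\<in>UNIV. \<pi>plus a * A s a) \<ge> M^2 / (M + (2 + 5 * real CARD('a)) / \<eta>)"
proof -
  have "\<pi> s \<in> prob_simplex" using \<open>is_policy \<pi>\<close> by (simp add: is_policy_def)
  moreover have "(\<Sum>a\<in>UNIV. \<pi> s a * A s a) = 0"
    unfolding A_def using assms(1,2) by (rule sum_policy_adv_eq_0)
  moreover have "4 \<le> 2 + 5 * real CARD('a)"
  proof -
    have "1 \<le> CARD('a)" by (simp add: Suc_le_eq)
    then show ?thesis by linarith
  qed
  ultimately show ?thesis
    using proj_simplex_ascent_lower_bound[of "\<pi> s" "A s" \<eta> "2 + 5 * real CARD('a)"] \<open>\<eta> > 0\<close>
    by (simp add: \<pi>plus_def M_def)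
qed

end
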